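(* Let $E$ be a closed subset of $\mathbb{R}^n$ and let $k \ge 1$ be such that every two points $x, y \in E$ can be connected by a rectifiable path contained in $E$ whose length is at most $k\,|x-y|$. Let $A$ be a continuous function on $E$ whose values $A(x)$ are linear mappings from $\mathbb{R}^n$ to $\mathbb{R}$, and let $f : E \to \mathbb{R}$ be locally Lipschitz. Suppose that for every interval $I \subseteq \mathbb{R}$ and every locally Lipschitz map $p : I \to E$, the derivative of $t \mapsto f(p(t))$ equals $A(p(t))(p'(t))$ for almost every $t \in I$. Then for every $x, y \in E$, $$|f(y) - f(x) - A(x)(y-x)| \le k\,|x-y|\,\sup\{\,|A(w) - A(x)| : w \in E,\ |x-w| \le k\,|x-y|\,\}.$$
   Context: $|\cdot|$ denotes the Euclidean norm on $\mathbb{R}^n$; for linear maps $B : \mathbb{R}^n \to \mathbb{R}$, $|B|$ denotes the operator norm (equivalently, the Euclidean norm of the vector representing $B$ via the standard inner product). *)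

theory Defs
  imports "HOL-Analysis.Analysis"
begin

definition loc_lipschitz_on :: "'a::metric_space set \<Rightarrow> ('a \<Rightarrow> 'b::metric_space) \<Rightarrow> bool" where
  "loc_lipschitz_on S f \<longleftrightarrow> (\<forall>x\<in>S. \<exists>r>0. \<exists>L. L-lipschitz_on (ball x r \<inter> S) f)"

definition path_variation :: "(real \<Rightarrow> 'a::real_normed_vector) \<Rightarrow> ereal" where
  "path_variation g = (SUP tm \<in> {(t, m). t (0::nat) = (0::real) \<and> t m = 1 \<and> (\<forall>i<m. t i \<le> t (Suc i))}.
      ereal (\<Sum>i<snd tm. norm (g (fst tm (Suc i)) - g (fst tm i))))"

definition rectifiable_path :: "(real \<Rightarrow> 'a::real_normed_vector) \<Rightarrow> bool" where
  "rectifiable_path g \<longleftrightarrow> path g \<and> path_variation g < \<infinity>"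

definition path_length :: "(real \<Rightarrow> 'a::real_normed_vector) \<Rightarrow> real" where
  "path_length g = real_of_ereal (path_variation g)"

end

theory Submission
  imports Defs
begin

text \<open>Join \<open>x\<close> to \<open>y\<close> by a path of length at most \<open>k |x - y|\<close> and parametrise it by arc length,
  so that it becomes a 1-Lipschitz curve \<open>p\<close> on \<open>[0, L]\<close> with \<open>L \<le> k |x - y|\<close>. The function
  \<open>\<phi>(s) = f(p(s)) - A(x)(p(s))\<close> is then locally Lipschitz with \<open>\<phi>' = (A(p(s)) - A(x))(p'(s))\<close>
  almost everywhere, so \<open>|\<phi>'| \<le> M\<close> a.e. for the supremum \<open>M\<close> of the statement. A locally
  Lipschitz function maps null sets to null sets, and by the change of variables bound it maps
  the set where \<open>|\<phi>'| \<le> M\<close> onto a set of measure at most \<open>M L\<close>. The image of \<open>[0, L]\<close> is an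
  interval containing \<open>\<phi>(0)\<close> and \<open>\<phi>(L)\<close>, whence \<open>|\<phi>(L) - \<phi>(0)| \<le> M L\<close>.\<close>

section \<open>Lebesgue measure of images of real functions\<close>

text \<open>The library bounds the measure of differentiable images only for maps on \<open>real^'n\<close>,
  hence the detour through \<open>real^1\<close>.\<close>

lemma lmeasurable_vec_image_iff:
  "(vec ` S :: (real^1) set) \<in> lmeasurable \<longleftrightarrow> S \<in> lmeasurable"
proof -
  let ?T = "vec ` S :: (real^1) set"
  have drop: "(\<lambda>x. x $ 1) ` ?T = S" by (force simp: image_comp o_def)
  have "(\<lambda>x::real^1. 1::real) integrable_on ?T \<longleftrightarrow> (\<lambda>x::real. 1::real) integrable_on (\<lambda>x. x $ 1) ` ?T"
    using has_integral_vec1_I [of "\<lambda>x::real^1. 1::real"] has_integral_vec1_D [of "\<lambda>x::real^1. 1::real"]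
    unfolding integrable_on_def o_def by metis
  then show ?thesis by (simp add: lmeasurable_iff_integrable_on drop)
qed

lemma measure_vec_image:
  assumes "S \<in> lmeasurable"
  shows "measure lebesgue (vec ` S :: (real^1) set) = measure lebesgue S"
proof -
  let ?T = "vec ` S :: (real^1) set"
  have drop: "(\<lambda>x. x $ 1) ` ?T = S" by (force simp: image_comp o_def)
  show ?thesis
    using assms lmeasurable_vec_image_iff[of S]
    by (simp add: lmeasure_integral integral_vec1_eq [of ?T "\<lambda>x. 1::real"] o_def drop)
qed

lemma measure_bounded_derivative_image_real:
  fixes \<phi> :: "real \<Rightarrow> real"
  assumes G: "G \<in> lmeasurable"
    and deriv: "\<And>t. t \<in> G \<Longrightarrow> (\<phi> has_real_derivative d t) (at t within G)"
    and bound: "\<And>t. t \<in> G \<Longrightarrow> \<bar>d t\<bar> \<le> M"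
  shows "\<phi> ` G \<in> lmeasurable" and "measure lebesgue (\<phi> ` G) \<le> M * measure lebesgue G"
proof -
  let ?G = "vec ` G :: (real^1) set"
  let ?F = "\<lambda>v::real^1. vec (\<phi> (v $ 1)) :: real^1"
  let ?F' = "\<lambda>x::real^1. (*\<^sub>R) (d (x $ 1)) :: real^1 \<Rightarrow> real^1"
  have G': "?G \<in> lmeasurable" using G by (simp add: lmeasurable_vec_image_iff)
  have FG: "?F ` ?G = vec ` (\<phi> ` G)" by (force simp: image_comp o_def)
  have det: "det (matrix (?F' x)) = d (x $ 1)" for x by simp
  have der: "(?F has_derivative ?F' x) (at x within ?G)" if "x \<in> ?G" for x
  proof -
    obtain z where z: "z \<in> G" "x = vec z" using \<open>x \<in> ?G\<close> by blast
    have "(\<phi> has_derivative (\<lambda>h. h * d z)) (at z within G)"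
      using deriv[OF z(1)] unfolding has_field_derivative_def by (simp add: mult.commute[of _ "d z"])
    from has_derivative_vector_1[where g'=d, OF this] show ?thesis using z by simp
  qed
  have "(\<lambda>x. matrix (?F' x) $ 1 $ 1) \<in> borel_measurable (lebesgue_on ?G)"
    by (rule borel_measurable_partial_derivatives[OF _ der]) (use G' in auto)
  then have "(\<lambda>x::real^1. d (x $ 1)) \<in> borel_measurable (lebesgue_on ?G)"
    using det by (simp add: det_1)
  then have "(\<lambda>x::real^1. d (x $ 1)) absolutely_integrable_on ?G"
    by (rule measurable_bounded_by_integrable_imp_absolutely_integrable[where g="\<lambda>_. M"])
       (use G' bound in \<open>auto intro: integrable_on_const\<close>)
  then have int: "(\<lambda>x. \<bar>det (matrix (?F' x))\<bar>) integrable_on ?G"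
    using absolutely_integrable_abs_iff by (simp add: absolutely_integrable_on_def)
  have bnd: "\<bar>det (matrix (?F' x))\<bar> \<le> M" if "x \<in> ?G" for x
    using that bound by auto
  have "?F ` ?G \<in> lmeasurable"
    by (rule measurable_bounded_differentiable_image[OF G' der int bnd])
  then show image: "\<phi> ` G \<in> lmeasurable"
    by (simp add: FG lmeasurable_vec_image_iff)
  have "measure lebesgue (?F ` ?G) \<le> M * measure lebesgue ?G"
    by (rule measure_bounded_differentiable_image[OF G' der int bnd])
  then show "measure lebesgue (\<phi> ` G) \<le> M * measure lebesgue G"
    by (simp add: FG measure_vec_image image G)
qed

section \<open>Locally Lipschitz functions\<close>

lemma lipschitz_on_imp_loc_lipschitz_on: "L-lipschitz_on S f \<Longrightarrow> loc_lipschitz_on S f"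
  unfolding loc_lipschitz_on_def by (blast intro: lipschitz_on_subset zero_less_one)

lemma loc_lipschitz_onE:
  assumes "loc_lipschitz_on S f" "x \<in> S"
  obtains T B where "open T" "x \<in> T" "\<And>y. y \<in> S \<inter> T \<Longrightarrow> dist (f y) (f x) \<le> B * dist y x"
proof -
  obtain r L where "r > 0" and L: "L-lipschitz_on (ball x r \<inter> S) f"
    using assms unfolding loc_lipschitz_on_def by blast
  with \<open>x \<in> S\<close> show ?thesis
    by (intro that[of "ball x r" L]) (auto intro: lipschitz_onD[OF L])
qed

lemma loc_lipschitz_on_imp_continuous_on:
  assumes "loc_lipschitz_on S f"
  shows "continuous_on S f"
  unfolding continuous_on_eq_continuous_within
proof
  fix x assume "x \<in> S"
  then obtain r L where "r > 0" and L: "L-lipschitz_on (ball x r \<inter> S) f"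
    using assms unfolding loc_lipschitz_on_def by blast
  have "at x within ball x r \<inter> S = at x within S"
    by (rule at_within_nhd[of x "ball x r"]) (use \<open>r > 0\<close> in auto)
  with lipschitz_on_continuous_within[OF L, of x] \<open>x \<in> S\<close> \<open>r > 0\<close>
  show "continuous (at x within S) f" by simp
qed

lemma loc_lipschitz_on_compose:
  assumes p: "loc_lipschitz_on S p" and pS: "p ` S \<subseteq> E" and f: "loc_lipschitz_on E f"
  shows "loc_lipschitz_on S (f \<circ> p)"
  unfolding loc_lipschitz_on_def
proof
  fix x assume "x \<in> S"
  obtain r1 L1 where "r1 > 0" and L1: "L1-lipschitz_on (ball (p x) r1 \<inter> E) f"
    using f pS \<open>x \<in> S\<close> unfolding loc_lipschitz_on_def by blast
  obtain r2 L2 where "r2 > 0" and L2: "L2-lipschitz_on (ball x r2 \<inter> S) p"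
    using p \<open>x \<in> S\<close> unfolding loc_lipschitz_on_def by blast
  have "L2 \<ge> 0" using lipschitz_on_nonneg[OF L2] .
  define r where "r = min r2 (r1 / (L2 + 1))"
  have "r > 0" using \<open>r1 > 0\<close> \<open>r2 > 0\<close> \<open>L2 \<ge> 0\<close> by (simp add: r_def)
  have L2r: "L2-lipschitz_on (ball x r \<inter> S) p"
    by (rule lipschitz_on_subset[OF L2]) (auto simp: r_def)
  have "p ` (ball x r \<inter> S) \<subseteq> ball (p x) r1 \<inter> E"
  proof (intro image_subsetI IntI)
    fix y assume y: "y \<in> ball x r \<inter> S"
    have "dist (p x) (p y) \<le> L2 * dist x y"
      using lipschitz_onD[OF L2r] y \<open>x \<in> S\<close> \<open>r > 0\<close> by simp
    also have "\<dots> \<le> L2 * (r1 / (L2 + 1))"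
      using y \<open>L2 \<ge> 0\<close> by (intro mult_left_mono) (auto simp: r_def)
    also have "\<dots> < r1" using \<open>r1 > 0\<close> \<open>L2 \<ge> 0\<close> by (simp add: field_simps)
    finally show "p y \<in> ball (p x) r1" by simp
    show "p y \<in> E" using pS y by blast
  qed
  then have "(L1 * L2)-lipschitz_on (ball x r \<inter> S) (f \<circ> p)"
    by (intro lipschitz_on_compose[OF L2r] lipschitz_on_subset[OF L1])
  with \<open>r > 0\<close> show "\<exists>r>0. \<exists>L. L-lipschitz_on (ball x r \<inter> S) (f \<circ> p)" by blast
qed

lemma loc_lipschitz_on_diff:
  fixes f g :: "'a::metric_space \<Rightarrow> 'b::real_normed_vector"
  assumes f: "loc_lipschitz_on S f" and g: "loc_lipschitz_on S g"
  shows "loc_lipschitz_on S (\<lambda>x. f x - g x)"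
  unfolding loc_lipschitz_on_def
proof
  fix x assume "x \<in> S"
  obtain r1 L1 where "r1 > 0" and L1: "L1-lipschitz_on (ball x r1 \<inter> S) f"
    using f \<open>x \<in> S\<close> unfolding loc_lipschitz_on_def by blast
  obtain r2 L2 where "r2 > 0" and L2: "L2-lipschitz_on (ball x r2 \<inter> S) g"
    using g \<open>x \<in> S\<close> unfolding loc_lipschitz_on_def by blast
  have "(L1 + L2)-lipschitz_on (ball x (min r1 r2) \<inter> S) (\<lambda>x. f x - g x)"
    by (intro lipschitz_on_diff lipschitz_on_subset[OF L1] lipschitz_on_subset[OF L2]) auto
  with \<open>r1 > 0\<close> \<open>r2 > 0\<close> show "\<exists>r>0. \<exists>L. L-lipschitz_on (ball x r \<inter> S) (\<lambda>x. f x - g x)"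
    by (intro exI[of _ "min r1 r2"]) auto
qed

lemma negligible_loc_lipschitz_image:
  fixes f :: "'a::euclidean_space \<Rightarrow> 'b::euclidean_space"
  assumes "DIM('a) \<le> DIM('b)" "loc_lipschitz_on S f" "negligible N" "N \<subseteq> S"
  shows "negligible (f ` N)"
proof (rule negligible_locally_Lipschitz_image[OF assms(1,3)])
  fix x assume "x \<in> N"
  then obtain T B where "open T" "x \<in> T" "\<And>y. y \<in> S \<inter> T \<Longrightarrow> dist (f y) (f x) \<le> B * dist y x"
    using loc_lipschitz_onE[OF assms(2)] assms(4) by blast
  then show "\<exists>T B. open T \<and> x \<in> T \<and> (\<forall>y\<in>N \<inter> T. norm (f y - f x) \<le> B * norm (y - x))"
    using assms(4) by (intro exI[of _ T] exI[of _ B]) (auto simp: dist_norm)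
qed

section \<open>A mean value inequality for locally Lipschitz functions\<close>

lemma measure_loc_lipschitz_image_le:
  fixes \<phi> :: "real \<Rightarrow> real"
  assumes S: "S \<in> lmeasurable" and lip: "loc_lipschitz_on S \<phi>" and N: "negligible N"
    and deriv: "\<And>t. t \<in> S - N \<Longrightarrow> \<exists>D. (\<phi> has_real_derivative D) (at t within S) \<and> \<bar>D\<bar> \<le> M"
    and "0 \<le> M"
  shows "\<phi> ` S \<in> lmeasurable" and "measure lebesgue (\<phi> ` S) \<le> M * measure lebesgue S"
proof -
  define d where "d t = (SOME D. (\<phi> has_real_derivative D) (at t within S) \<and> \<bar>D\<bar> \<le> M)" for t
  have d: "(\<phi> has_real_derivative d t) (at t within S) \<and> \<bar>d t\<bar> \<le> M" if "t \<in> S - N" for t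
    unfolding d_def using someI_ex[OF deriv[OF that]] .
  define G where "G = S - N"
  have G: "G \<in> lmeasurable"
    unfolding G_def using S negligible_imp_sets[OF N] by (rule fmeasurable_Diff)
  have imG: "\<phi> ` G \<in> lmeasurable" "measure lebesgue (\<phi> ` G) \<le> M * measure lebesgue G"
    by (rule measure_bounded_derivative_image_real[OF G, where d=d];
        use d in \<open>auto simp: G_def intro: DERIV_subset\<close>)+
  have negN: "negligible (\<phi> ` (S \<inter> N))"
    using negligible_subset[OF N, of "S \<inter> N"] by (intro negligible_loc_lipschitz_image[OF _ lip]) auto
  have split: "\<phi> ` S = \<phi> ` G \<union> \<phi> ` (S \<inter> N)" by (auto simp: G_def)
  show "\<phi> ` S \<in> lmeasurable"
    unfolding split using imG(1) negligible_imp_measurable[OF negN] by (rule fmeasurable.Un)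
  have "measure lebesgue (\<phi> ` S) \<le> measure lebesgue (\<phi> ` G) + measure lebesgue (\<phi> ` (S \<inter> N))"
    unfolding split using imG(1) negligible_imp_measurable[OF negN] by (intro measure_Un_le fmeasurableD)
  also have "\<dots> \<le> M * measure lebesgue G"
    using imG(2) negN by (simp add: negligible_imp_measure0)
  also have "\<dots> \<le> M * measure lebesgue S"
    using G S \<open>0 \<le> M\<close> by (intro mult_left_mono measure_mono_fmeasurable) (auto simp: G_def)
  finally show "measure lebesgue (\<phi> ` S) \<le> M * measure lebesgue S" .
qed

lemma abs_diff_le_measure_image_interval:
  fixes \<phi> :: "real \<Rightarrow> real"
  assumes "a \<le> b" and "continuous_on {a..b} \<phi>"
  shows "\<bar>\<phi> b - \<phi> a\<bar> \<le> measure lebesgue (\<phi> ` {a..b})"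
proof -
  have "convex (\<phi> ` {a..b})"
    using connected_continuous_image[OF assms(2)]
    by (metis connected_Icc is_interval_connected_1 is_interval_convex_1)
  with \<open>a \<le> b\<close> have seg: "closed_segment (\<phi> a) (\<phi> b) \<subseteq> \<phi> ` {a..b}"
    by (simp add: closed_segment_subset)
  have "\<phi> ` {a..b} \<in> lmeasurable"
    using assms(2) by (simp add: lmeasurable_compact compact_continuous_image)
  then have "measure lebesgue (closed_segment (\<phi> a) (\<phi> b)) \<le> measure lebesgue (\<phi> ` {a..b})"
    using seg by (intro measure_mono_fmeasurable) (auto simp: closed_segment_eq_real_ivl)
  then show ?thesis by (auto simp: closed_segment_eq_real_ivl split: if_splits)
qed

lemma mean_value_ineq_ae_deriv:
  fixes \<phi> :: "real \<Rightarrow> real"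
  assumes "a \<le> b" and lip: "loc_lipschitz_on {a..b} \<phi>" and "negligible N" and "0 \<le> M"
    and "\<And>t. t \<in> {a..b} - N \<Longrightarrow> \<exists>D. (\<phi> has_real_derivative D) (at t within {a..b}) \<and> \<bar>D\<bar> \<le> M"
  shows "\<bar>\<phi> b - \<phi> a\<bar> \<le> M * (b - a)"
proof -
  have "\<bar>\<phi> b - \<phi> a\<bar> \<le> measure lebesgue (\<phi> ` {a..b})"
    using \<open>a \<le> b\<close> loc_lipschitz_on_imp_continuous_on[OF lip]
    by (rule abs_diff_le_measure_image_interval)
  also have "\<dots> \<le> M * measure lebesgue {a..b}"
    by (rule measure_loc_lipschitz_image_le(2)[OF _ lip]) (use assms in auto)
  finally show ?thesis using \<open>a \<le> b\<close> by simp
qed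

section \<open>Arc length parametrisation of rectifiable paths\<close>

text \<open>\<open>path_variation g\<close> is the supremum of \<open>inscribed_length g\<close> over \<open>partitions 1\<close>.\<close>

definition partitions :: "real \<Rightarrow> ((nat \<Rightarrow> real) \<times> nat) set" where
  "partitions t = {(\<tau>, m). \<tau> 0 = 0 \<and> \<tau> m = t \<and> (\<forall>i<m. \<tau> i \<le> \<tau> (Suc i))}"

definition inscribed_length :: "(real \<Rightarrow> 'a::real_normed_vector) \<Rightarrow> (nat \<Rightarrow> real) \<times> nat \<Rightarrow> real"
  where "inscribed_length g P = (\<Sum>i<snd P. norm (g (fst P (Suc i)) - g (fst P i)))"

definition arc_length :: "(real \<Rightarrow> 'a::real_normed_vector) \<Rightarrow> real \<Rightarrow> real" where
  "arc_length g t = Sup (inscribed_length g ` partitions t)"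

lemma partitions_trivial: "0 \<le> t \<Longrightarrow> (\<lambda>i. if i = 0 then 0 else t, 1) \<in> partitions t"
  by (auto simp: partitions_def)

lemma partitions_extend:
  assumes "(\<tau>, m) \<in> partitions t" "t \<le> t'"
  shows "(\<tau>(Suc m := t'), Suc m) \<in> partitions t'"
    and "inscribed_length g (\<tau>(Suc m := t'), Suc m) = inscribed_length g (\<tau>, m) + norm (g t' - g t)"
proof -
  show "(\<tau>(Suc m := t'), Suc m) \<in> partitions t'"
    using assms by (auto simp: partitions_def less_Suc_eq)
  have "(\<Sum>i<m. norm (g ((\<tau>(Suc m := t')) (Suc i)) - g ((\<tau>(Suc m := t')) i)))
      = (\<Sum>i<m. norm (g (\<tau> (Suc i)) - g (\<tau> i)))"
    by (intro sum.cong) auto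
  then show "inscribed_length g (\<tau>(Suc m := t'), Suc m) = inscribed_length g (\<tau>, m) + norm (g t' - g t)"
    using assms by (simp add: inscribed_length_def partitions_def)
qed

lemma inscribed_length_nonneg: "0 \<le> inscribed_length g P"
  by (simp add: inscribed_length_def sum_nonneg)

context
  fixes g :: "real \<Rightarrow> 'a::real_normed_vector"
  assumes rectifiable: "rectifiable_path g"
begin

lemma continuous_on_path: "continuous_on {0..1} g"
  using rectifiable by (simp add: rectifiable_path_def path_def)

lemma inscribed_length_le_path_length:
  assumes P: "P \<in> partitions t" and "t \<le> 1"
  shows "inscribed_length g P \<le> path_length g"
proof -
  obtain \<tau> m where P_eq: "P = (\<tau>, m)" by (cases P)
  let ?Q = "(\<tau>(Suc m := 1), Suc m)"
  have Q: "?Q \<in> partitions 1" "inscribed_length g ?Q = inscribed_length g P + norm (g 1 - g t)"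
    using partitions_extend[of \<tau> m t 1] P \<open>t \<le> 1\<close> P_eq by auto
  have "ereal (inscribed_length g ?Q) \<le> path_variation g"
    unfolding path_variation_def
    by (rule SUP_upper2[OF Q(1)[unfolded partitions_def]]) (simp add: inscribed_length_def)
  moreover have "path_variation g < \<infinity>" using rectifiable by (simp add: rectifiable_path_def)
  ultimately have "inscribed_length g ?Q \<le> path_length g"
    unfolding path_length_def by (cases "path_variation g") auto
  then show ?thesis using Q(2) norm_ge_zero[of "g 1 - g t"] by linarith
qed

lemma bdd_above_inscribed_length: "t \<le> 1 \<Longrightarrow> bdd_above (inscribed_length g ` partitions t)"
  using inscribed_length_le_path_length by (auto intro!: bdd_aboveI)

lemma arc_length_nonneg: "0 \<le> t \<Longrightarrow> t \<le> 1 \<Longrightarrow> 0 \<le> arc_length g t"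
  unfolding arc_length_def
  by (rule order.trans[OF inscribed_length_nonneg
        cSup_upper[OF imageI[OF partitions_trivial] bdd_above_inscribed_length]])

lemma arc_length_le_path_length:
  assumes "0 \<le> t" "t \<le> 1"
  shows "arc_length g t \<le> path_length g"
  unfolding arc_length_def
  by (rule cSup_least)
     (use partitions_trivial[OF assms(1)] inscribed_length_le_path_length assms(2) in auto)

lemma arc_length_add_norm_le:
  assumes "0 \<le> t" "t \<le> t'" "t' \<le> 1"
  shows "arc_length g t + norm (g t' - g t) \<le> arc_length g t'"
proof -
  have "arc_length g t \<le> arc_length g t' - norm (g t' - g t)"
    unfolding arc_length_def[of g t]
  proof (rule cSup_least)
    show "inscribed_length g ` partitions t \<noteq> {}" using assms partitions_trivial by blast
    fix z assume "z \<in> inscribed_length g ` partitions t"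
    then obtain \<tau> m where P: "(\<tau>, m) \<in> partitions t" "z = inscribed_length g (\<tau>, m)" by auto
    have "inscribed_length g (\<tau>(Suc m := t'), Suc m) \<le> arc_length g t'"
      unfolding arc_length_def
      using partitions_extend(1)[OF P(1) assms(2)] bdd_above_inscribed_length[OF assms(3)]
      by (auto intro: cSup_upper)
    then show "z \<le> arc_length g t' - norm (g t' - g t)"
      using partitions_extend(2)[OF P(1) assms(2), of g] P(2) by simp
  qed
  then show ?thesis by simp
qed

lemma arc_length_mono: "0 \<le> t \<Longrightarrow> t \<le> t' \<Longrightarrow> t' \<le> 1 \<Longrightarrow> arc_length g t \<le> arc_length g t'"
  using arc_length_add_norm_le[of t t'] norm_ge_zero[of "g t' - g t"] by linarith

text \<open>The arc length is constant only on intervals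
  where \<open>g\<close> is constant, so \<open>g \<circ> arc_param\<close> traverses \<open>g\<close> at unit speed.\<close>

definition arc_param :: "real \<Rightarrow> real" where
  "arc_param \<sigma> = Sup {u \<in> {0..1}. arc_length g u \<le> \<sigma>}"

lemma arc_param_bounds:
  assumes "arc_length g 0 \<le> \<sigma>"
  shows "u \<in> {0..1} \<Longrightarrow> arc_length g u \<le> \<sigma> \<Longrightarrow> u \<le> arc_param \<sigma>"
    and "0 \<le> arc_param \<sigma>" and "arc_param \<sigma> \<le> 1"
    and "u \<in> {0..1} \<Longrightarrow> arc_param \<sigma> < u \<Longrightarrow> \<sigma> < arc_length g u"
    and "arc_param \<sigma> \<in> closure {u \<in> {0..1}. arc_length g u \<le> \<sigma>}"
    and "s < arc_param \<sigma> \<Longrightarrow> \<exists>u \<in> {0..1}. arc_length g u \<le> \<sigma> \<and> s < u"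
proof -
  let ?X = "{u \<in> {0..1}. arc_length g u \<le> \<sigma>}"
  have "0 \<in> ?X" using assms by simp
  then have ne: "?X \<noteq> {}" by blast
  have bdd: "bdd_above ?X" by (auto intro!: bdd_aboveI[of _ 1])
  show le: "u \<le> arc_param \<sigma>" if "u \<in> {0..1}" "arc_length g u \<le> \<sigma>" for u
    unfolding arc_param_def using that bdd by (intro cSup_upper) auto
  show "0 \<le> arc_param \<sigma>" using le[of 0] assms by simp
  show "arc_param \<sigma> \<le> 1" unfolding arc_param_def using ne by (intro cSup_least) auto
  show "\<sigma> < arc_length g u" if "u \<in> {0..1}" "arc_param \<sigma> < u" for u
    using le[of u] that by force
  show "arc_param \<sigma> \<in> closure ?X"
    unfolding arc_param_def using ne bdd by (rule closure_contains_Sup)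
  show "\<exists>u \<in> {0..1}. arc_length g u \<le> \<sigma> \<and> s < u" if "s < arc_param \<sigma>"
    using that less_cSup_iff[OF ne bdd] unfolding arc_param_def by auto
qed

lemma arc_param_mono:
  assumes "arc_length g 0 \<le> \<sigma>" "\<sigma> \<le> \<sigma>'"
  shows "arc_param \<sigma> \<le> arc_param \<sigma>'"
proof -
  have "0 \<in> {u \<in> {0..1}. arc_length g u \<le> \<sigma>}" using assms by simp
  then have "{u \<in> {0..1}. arc_length g u \<le> \<sigma>} \<noteq> {}" by blast
  then show ?thesis
    unfolding arc_param_def by (rule cSup_subset_mono) (use assms in \<open>auto intro!: bdd_aboveI[of _ 1]\<close>)
qed

lemma arc_param_start: "g (arc_param (arc_length g 0)) = g 0"
proof -
  let ?X = "{u \<in> {0..1}. arc_length g u \<le> arc_length g 0}"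
  have "closure ?X \<subseteq> {0..1}" by (rule closure_minimal) auto
  then have "continuous_on (closure ?X) (\<lambda>u. norm (g u - g 0))"
    by (intro continuous_intros continuous_on_subset[OF continuous_on_path])
  then have "norm (g (arc_param (arc_length g 0)) - g 0) \<le> 0"
  proof (rule continuous_le_on_closure[OF _ arc_param_bounds(5)])
    fix u assume "u \<in> ?X"
    then have "0 \<le> u" "u \<le> 1" "arc_length g u \<le> arc_length g 0" by auto
    with arc_length_add_norm_le[of 0 u] show "norm (g u - g 0) \<le> 0" by linarith
  qed simp
  then show ?thesis by simp
qed

lemma arc_param_finish: "arc_param (arc_length g 1) = 1"
proof -
  have "{u \<in> {0..1}. arc_length g u \<le> arc_length g 1} = {0..1}"
    using arc_length_mono[of _ 1] by auto
  then show ?thesis by (simp add: arc_param_def)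
qed

lemma dist_arc_param_le_beyond:
  assumes "arc_length g 0 \<le> \<sigma>" "u \<in> {0..1}" "arc_param \<sigma> < u" "arc_length g u \<le> \<sigma>'"
  shows "norm (g u - g (arc_param \<sigma>)) \<le> \<sigma>' - \<sigma>"
proof -
  let ?T = "arc_param \<sigma>"
  have cl: "closure {?T<..<u} = {?T..u}" using assms(3) by simp
  have "{?T..u} \<subseteq> {0..1}" using assms(2) arc_param_bounds(2)[OF assms(1)] by auto
  then have "continuous_on (closure {?T<..<u}) (\<lambda>w. norm (g u - g w))"
    unfolding cl by (intro continuous_intros continuous_on_subset[OF continuous_on_path])
  then show ?thesis
  proof (rule continuous_le_on_closure)
    show "?T \<in> closure {?T<..<u}" using cl assms(3) by simp
    fix w assume w: "w \<in> {?T<..<u}"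
    then have w01: "0 \<le> w" "w \<le> u" "u \<le> 1"
      using assms(2) arc_param_bounds(2)[OF assms(1)] by auto
    have "\<sigma> < arc_length g w" using arc_param_bounds(4)[OF assms(1)] w w01 by auto
    with arc_length_add_norm_le[OF w01] assms(4)
    show "norm (g u - g w) \<le> \<sigma>' - \<sigma>" by linarith
  qed
qed

lemma dist_arc_param_le:
  assumes "arc_length g 0 \<le> \<sigma>" "\<sigma> \<le> \<sigma>'"
  shows "norm (g (arc_param \<sigma>') - g (arc_param \<sigma>)) \<le> \<sigma>' - \<sigma>"
proof (cases "arc_param \<sigma>' \<le> arc_param \<sigma>")
  case True
  with arc_param_mono[OF assms] show ?thesis using assms by simp
next
  case False
  have \<sigma>': "arc_length g 0 \<le> \<sigma>'" using assms by linarith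
  let ?U = "{u \<in> {0..1}. arc_length g u \<le> \<sigma>' \<and> arc_param \<sigma> < u}"
  have limit: "arc_param \<sigma>' \<in> closure ?U"
    unfolding closure_approachable
  proof (intro allI impI)
    fix e :: real assume "e > 0"
    have "max (arc_param \<sigma>) (arc_param \<sigma>' - e) < arc_param \<sigma>'"
      using False \<open>e > 0\<close> by simp
    then obtain u where "u \<in> {0..1}" "arc_length g u \<le> \<sigma>'" "max (arc_param \<sigma>) (arc_param \<sigma>' - e) < u"
      using arc_param_bounds(6)[OF \<sigma>'] by blast
    moreover have "u \<le> arc_param \<sigma>'" using arc_param_bounds(1)[OF \<sigma>'] calculation by blast
    ultimately show "\<exists>u\<in>?U. dist u (arc_param \<sigma>') < e" by (auto simp: dist_real_def)
  qed
  have "closure ?U \<subseteq> {0..1}" by (rule closure_minimal) auto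
  then have "continuous_on (closure ?U) (\<lambda>u. norm (g u - g (arc_param \<sigma>)))"
    by (intro continuous_intros continuous_on_subset[OF continuous_on_path])
  then show ?thesis
  proof (rule continuous_le_on_closure[OF _ limit])
    fix u assume "u \<in> ?U"
    then show "norm (g u - g (arc_param \<sigma>)) \<le> \<sigma>' - \<sigma>"
      by (intro dist_arc_param_le_beyond[OF assms(1)]) auto
  qed
qed

lemma rectifiable_path_arc_length_reparametrization:
  obtains p L where "0 \<le> L" "L \<le> path_length g" "1-lipschitz_on {0..L} p"
    "p 0 = pathstart g" "p L = pathfinish g" "p ` {0..L} \<subseteq> path_image g"
proof
  let ?a = "arc_length g 0" and ?b = "arc_length g 1"
  let ?p = "\<lambda>\<sigma>. g (arc_param (?a + \<sigma>))"
  show "0 \<le> ?b - ?a" using arc_length_mono[of 0 1] by simp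
  show "?b - ?a \<le> path_length g" using arc_length_nonneg[of 0] arc_length_le_path_length[of 1] by simp
  show "1-lipschitz_on {0..?b - ?a} ?p"
  proof (rule lipschitz_onI)
    fix s t assume "s \<in> {0..?b - ?a}" "t \<in> {0..?b - ?a}"
    then show "dist (?p s) (?p t) \<le> 1 * dist s t"
      using dist_arc_param_le[of "?a + s" "?a + t"] dist_arc_param_le[of "?a + t" "?a + s"]
      by (cases "s \<le> t") (auto simp: dist_norm dist_real_def norm_minus_commute)
  qed simp
  show "?p 0 = pathstart g" using arc_param_start by (simp add: pathstart_def)
  show "?p (?b - ?a) = pathfinish g" using arc_param_finish by (simp add: pathfinish_def)
  show "?p ` {0..?b - ?a} \<subseteq> path_image g"
    using arc_param_bounds(2,3) by (auto simp: path_image_def)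
qed

end

section \<open>The linearisation error along a curve\<close>

lemma has_real_derivative_inner_right:
  fixes p :: "real \<Rightarrow> 'a::real_inner"
  assumes "(p has_vector_derivative v) F"
  shows "((\<lambda>s. c \<bullet> p s) has_real_derivative c \<bullet> v) F"
proof -
  have "(p has_derivative (\<lambda>h. h *\<^sub>R v)) F" using assms by (simp add: has_vector_derivative_def)
  then have "((\<lambda>s. c \<bullet> p s) has_derivative (\<lambda>h. c \<bullet> (h *\<^sub>R v))) F"
    by (rule has_derivative_inner_right)
  then show ?thesis unfolding has_field_derivative_def by (simp add: mult.commute[of _ "c \<bullet> v"])
qed

lemma norm_vector_derivative_le_lipschitz:
  fixes p :: "real \<Rightarrow> 'a::real_inner"
  assumes lip: "B-lipschitz_on S p" and "t \<in> S" and nontriv: "at t within S \<noteq> bot"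
    and der: "(p has_vector_derivative v) (at t within S)"
  shows "norm v \<le> B"
proof -
  have "((\<lambda>s. v \<bullet> p s) has_real_derivative v \<bullet> v) (at t within S)"
    by (rule has_real_derivative_inner_right[OF der])
  then have lim: "((\<lambda>y. (v \<bullet> p y - v \<bullet> p t) / (y - t)) \<longlongrightarrow> v \<bullet> v) (at t within S)"
    by (simp add: has_field_derivative_iff)
  have "\<forall>\<^sub>F y in at t within S. \<bar>(v \<bullet> p y - v \<bullet> p t) / (y - t)\<bar> \<le> norm v * B"
    unfolding eventually_at_filter
  proof (rule always_eventually, intro allI impI)
    fix y assume y: "y \<noteq> t" "y \<in> S"
    have "\<bar>v \<bullet> p y - v \<bullet> p t\<bar> = \<bar>v \<bullet> (p y - p t)\<bar>" by (simp add: inner_diff_right)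
    also have "\<dots> \<le> norm v * norm (p y - p t)" by (rule Cauchy_Schwarz_ineq2)
    also have "\<dots> \<le> norm v * (B * \<bar>y - t\<bar>)"
      using lipschitz_onD[OF lip y(2) \<open>t \<in> S\<close>] by (intro mult_left_mono) (auto simp: dist_norm)
    finally show "\<bar>(v \<bullet> p y - v \<bullet> p t) / (y - t)\<bar> \<le> norm v * B"
      using y by (simp add: abs_divide divide_le_eq)
  qed
  then have "\<bar>v \<bullet> v\<bar> \<le> norm v * B"
    by (rule tendsto_upperbound[OF tendsto_rabs[OF lim] _ nontriv])
  then have "norm v * norm v \<le> norm v * B"
    by (simp add: power2_norm_eq_inner[symmetric] power2_eq_square)
  then show ?thesis
    using lipschitz_on_nonneg[OF lip] by (cases "norm v = 0") (auto simp: mult_le_cancel_left)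
qed

lemma linearization_error_along_lipschitz_curve:
  fixes p :: "real \<Rightarrow> 'a::real_inner" and f :: "'a \<Rightarrow> real"
  assumes "0 \<le> L" and lip_p: "1-lipschitz_on {0..L} p" and pE: "p ` {0..L} \<subseteq> E"
    and lip_f: "loc_lipschitz_on E f"
    and ae: "AE t in lebesgue. t \<in> {0..L} \<longrightarrow>
             (\<exists>v D. (p has_vector_derivative v) (at t within {0..L})
                  \<and> ((\<lambda>s. f (p s)) has_real_derivative D) (at t within {0..L})
                  \<and> D = A (p t) \<bullet> v)"
    and bound: "\<And>t. t \<in> {0..L} \<Longrightarrow> norm (A (p t) - c) \<le> M" and "0 \<le> M"
  shows "\<bar>f (p L) - f (p 0) - c \<bullet> (p L - p 0)\<bar> \<le> M * L"
proof (cases "L = 0")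
  case False
  define \<phi> where "\<phi> = (\<lambda>s. f (p s) - c \<bullet> p s)"
  obtain N where N: "negligible N" and N_ae: "\<And>t. t \<in> {0..L} - N \<Longrightarrow>
      \<exists>v D. (p has_vector_derivative v) (at t within {0..L})
          \<and> ((\<lambda>s. f (p s)) has_real_derivative D) (at t within {0..L}) \<and> D = A (p t) \<bullet> v"
    using ae by (rule AE_E3) (auto simp: negligible_iff_null_sets)
  have lip_p': "loc_lipschitz_on {0..L} p" using lip_p by (rule lipschitz_on_imp_loc_lipschitz_on)
  obtain B where "B-lipschitz_on UNIV (\<lambda>z. c \<bullet> z)"
    using bounded_linear.lipschitz_boundE[OF bounded_linear_inner_right] by blast
  then have lip_c: "loc_lipschitz_on UNIV (\<lambda>z. c \<bullet> z)" by (rule lipschitz_on_imp_loc_lipschitz_on)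
  have "loc_lipschitz_on {0..L} (\<lambda>s. (f \<circ> p) s - ((\<lambda>z. c \<bullet> z) \<circ> p) s)"
    by (intro loc_lipschitz_on_diff loc_lipschitz_on_compose[OF lip_p' pE lip_f]
          loc_lipschitz_on_compose[OF lip_p' subset_UNIV lip_c])
  then have lip_\<phi>: "loc_lipschitz_on {0..L} \<phi>" by (simp add: \<phi>_def o_def)
  have "\<exists>D. (\<phi> has_real_derivative D) (at t within {0..L}) \<and> \<bar>D\<bar> \<le> M" if t: "t \<in> {0..L} - N" for t
  proof -
    obtain v D where v: "(p has_vector_derivative v) (at t within {0..L})"
      and D: "((\<lambda>s. f (p s)) has_real_derivative D) (at t within {0..L})" "D = A (p t) \<bullet> v"
      using N_ae[OF t] by blast
    have "at t within {0..L} \<noteq> bot"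
      using t \<open>0 \<le> L\<close> False by (simp add: trivial_limit_within)
    then have "norm v \<le> 1"
      using norm_vector_derivative_le_lipschitz[OF lip_p _ _ v] t by blast
    have "\<bar>D - c \<bullet> v\<bar> = \<bar>(A (p t) - c) \<bullet> v\<bar>" using D(2) by (simp add: inner_diff_left)
    also have "\<dots> \<le> norm (A (p t) - c) * norm v" by (rule Cauchy_Schwarz_ineq2)
    also have "\<dots> \<le> M * 1"
      using bound[of t] t \<open>norm v \<le> 1\<close> \<open>0 \<le> M\<close> by (intro mult_mono) auto
    finally have "\<bar>D - c \<bullet> v\<bar> \<le> M" by simp
    moreover have "(\<phi> has_real_derivative D - c \<bullet> v) (at t within {0..L})"
      unfolding \<phi>_def by (intro DERIV_diff D(1) has_real_derivative_inner_right v)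
    ultimately show ?thesis by blast
  qed
  then have "\<bar>\<phi> L - \<phi> 0\<bar> \<le> M * (L - 0)"
    by (intro mean_value_ineq_ae_deriv[OF \<open>0 \<le> L\<close> lip_\<phi> N \<open>0 \<le> M\<close>])
  then show ?thesis by (simp add: \<phi>_def inner_diff_right)
qed simp

lemma norm_diff_le_Sup_cball:
  fixes A :: "'a::euclidean_space \<Rightarrow> 'b::real_normed_vector"
  assumes "closed E" "continuous_on E A" "w \<in> E" "norm (x - w) \<le> R"
  shows "norm (A w - A x) \<le> Sup {norm (A w - A x) | w. w \<in> E \<and> norm (x - w) \<le> R}"
proof (rule cSup_upper)
  have "compact ((\<lambda>w. norm (A w - A x)) ` (E \<inter> cball x R))"
    using assms(1,2) by (intro compact_continuous_image continuous_intros closed_Int_compact)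
                        (auto intro: continuous_on_subset)
  moreover have "{norm (A w - A x) | w. w \<in> E \<and> norm (x - w) \<le> R}
      = (\<lambda>w. norm (A w - A x)) ` (E \<inter> cball x R)"
    by (auto simp: dist_norm)
  ultimately show "bdd_above {norm (A w - A x) | w. w \<in> E \<and> norm (x - w) \<le> R}"
    by (simp add: bounded_imp_bdd_above compact_imp_bounded)
qed (use assms in auto)

theorem mainTheorem2:
  fixes E :: "'a::euclidean_space set"
    and k :: real
    and A :: "'a \<Rightarrow> 'a"
    and f :: "'a \<Rightarrow> real"
  assumes "closed E"
    and "k \<ge> 1"
    and "\<forall>x\<in>E. \<forall>y\<in>E. \<exists>g. rectifiable_path g \<and> pathstart g = x \<and> pathfinish g = y
           \<and> path_image g \<subseteq> E \<and> path_length g \<le> k * norm (x - y)"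
    and "continuous_on E A"
    and "loc_lipschitz_on E f"
    and "\<And>I p. is_interval I \<Longrightarrow> p ` I \<subseteq> E \<Longrightarrow> loc_lipschitz_on I p \<Longrightarrow>
           AE t in lebesgue. t \<in> I \<longrightarrow>
             (\<exists>v D. (p has_vector_derivative v) (at t within I)
                  \<and> ((\<lambda>s. f (p s)) has_real_derivative D) (at t within I)
                  \<and> D = A (p t) \<bullet> v)"
  shows "\<forall>x\<in>E. \<forall>y\<in>E. \<bar>f y - f x - A x \<bullet> (y - x)\<bar>
           \<le> k * norm (x - y) * Sup {norm (A w - A x) | w. w \<in> E \<and> norm (x - w) \<le> k * norm (x - y)}"
proof (intro ballI)
  fix x y assume "x \<in> E" "y \<in> E"
  define R where "R = k * norm (x - y)"
  define M where "M = Sup {norm (A w - A x) | w. w \<in> E \<and> norm (x - w) \<le> R}"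
  obtain g where g: "rectifiable_path g" "pathstart g = x" "pathfinish g = y"
    "path_image g \<subseteq> E" "path_length g \<le> R"
    using assms(3) \<open>x \<in> E\<close> \<open>y \<in> E\<close> unfolding R_def by blast
  obtain p L where p: "0 \<le> L" "L \<le> path_length g" "1-lipschitz_on {0..L} p"
    "p 0 = x" "p L = y" "p ` {0..L} \<subseteq> path_image g"
    using rectifiable_path_arc_length_reparametrization[OF g(1)] unfolding g(2,3) .
  have pE: "p ` {0..L} \<subseteq> E" using p(6) g(4) by (rule order.trans)
  have "0 \<le> R" using assms(2) by (simp add: R_def)
  have "norm (x - p t) \<le> R" if "t \<in> {0..L}" for t
    using lipschitz_onD[OF p(3), of 0 t] that p(1,2,4) g(5) by (simp add: dist_norm)
  then have bound: "norm (A (p t) - A x) \<le> M" if "t \<in> {0..L}" for t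
    unfolding M_def using that pE by (intro norm_diff_le_Sup_cball[OF assms(1,4)]) auto
  have "0 \<le> M"
    unfolding M_def using norm_diff_le_Sup_cball[OF assms(1,4) \<open>x \<in> E\<close>, of x R] \<open>0 \<le> R\<close> by simp
  have "\<bar>f (p L) - f (p 0) - A x \<bullet> (p L - p 0)\<bar> \<le> M * L"
    using p(1,3) pE assms(5) assms(6)[OF is_interval_cc pE lipschitz_on_imp_loc_lipschitz_on[OF p(3)]]
      bound \<open>0 \<le> M\<close> by (rule linearization_error_along_lipschitz_curve)
  also have "\<dots> \<le> M * R" using p(2) g(5) \<open>0 \<le> M\<close> by (intro mult_left_mono) auto
  finally show "\<bar>f y - f x - A x \<bullet> (y - x)\<bar>
      \<le> k * norm (x - y) * Sup {norm (A w - A x) | w. w \<in> E \<and> norm (x - w) \<le> k * norm (x - y)}"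
    using p(4,5) by (simp add: M_def R_def mult.commute)
qed

end
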